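(* Let $A(t)=\sum_{n\ge1}|\mathbf{I}_n(201,210)|\,t^n$. Then $A$ satisfies $$(2t^2-2t+1)A^2+(4t^2-3t)A+2t^2=0,$$ and $$A(t)=\frac{3t-4t^2-t\sqrt{1-8t}}{4t^2-4t+2}.$$
   Context: $\mathbf{I}_n=\{(e_1,\dots,e_n)\in\mathbb{N}^n:0\le e_i<i\}$. $\mathbf{I}_n(201,210)$ is the set of $e\in\mathbf{I}_n$ with no indices $i<j<k$ such that $e_j<e_k<e_i$ and no indices $i<j<k$ such that $e_i>e_j>e_k$. *)

theory Defs
  imports Complex_Main "HOL-Computational_Algebra.Formal_Power_Series"
begin

text \<open>Inversion sequences of length n, written as lists e with e = [e_1,...,e_n],
  so the 1-indexed condition 0 <= e_i < i becomes e ! i <= i for 0-indexed i.\<close>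
definition inv_seqs :: "nat \<Rightarrow> nat list set" where
  "inv_seqs n = {e. length e = n \<and> (\<forall>i<n. e ! i < i + 1)}"

definition contains_201 :: "nat list \<Rightarrow> bool" where
  "contains_201 e \<longleftrightarrow> (\<exists>i j k. i < j \<and> j < k \<and> k < length e \<and> e ! j < e ! k \<and> e ! k < e ! i)"

definition contains_210 :: "nat list \<Rightarrow> bool" where
  "contains_210 e \<longleftrightarrow> (\<exists>i j k. i < j \<and> j < k \<and> k < length e \<and> e ! i > e ! j \<and> e ! j > e ! k)"

definition I_201_210 :: "nat \<Rightarrow> nat list set" where
  "I_201_210 n = {e \<in> inv_seqs n. \<not> contains_201 e \<and> \<not> contains_210 e}"

definition coeffA :: "nat \<Rightarrow> real" where
  "coeffA n = (if n = 0 then 0 else real (card (I_201_210 n)))"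

definition fpsA :: "real fps" where
  "fpsA = Abs_fps coeffA"

end

(*
  An inversion sequence avoids 201 and 210 iff, for every entry, all later entries smaller than it
  are equal.  Reading such a sequence from left to right, the values that may be appended are
  governed by a small state: the running maximum M and, once some entry has fallen below the
  running maximum, the maximum H at the last such moment together with the entry v that fell below
  it; x may be appended iff x >= H or x = v.  Hence the number of ways to extend a sequence by m
  entries depends only on the phase, on a = length - M and on b = M - H, and the generating
  functions G(ph, a, b) of these numbers satisfy a linear recursion.  It is solved in closed form
  in terms of the root C = (1 - sqrt(1 - 8t)) / (4t) of 2 t C^2 = C - 1, giving
  A = t G(False, 1, 0) = (C - 1) / (1 + C^2), from which both identities follow.  The coefficients
  of A grow at most like 8^n, so the series converges for |t| < 1/8.
*)

theory Submission
  imports Defs "HOL-Analysis.FPS_Convergence" "HOL-Analysis.Generalised_Binomial_Theorem"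
begin

unbundle no vec_syntax
unbundle fps_syntax

section \<open>Avoiding 201 and 210\<close>

definition avoids_201_210 :: "nat list \<Rightarrow> bool" where
  "avoids_201_210 e \<longleftrightarrow>
     (\<forall>i j k. i < j \<longrightarrow> j < k \<longrightarrow> k < length e \<longrightarrow> e!j < e!i \<longrightarrow> e!k < e!i \<longrightarrow> e!j = e!k)"

lemma avoids_201_210_iff: "avoids_201_210 e \<longleftrightarrow> \<not> contains_201 e \<and> \<not> contains_210 e"
proof
  assume "avoids_201_210 e"
  note avoid = this[unfolded avoids_201_210_def, rule_format]
  show "\<not> contains_201 e \<and> \<not> contains_210 e"
    unfolding contains_201_def contains_210_def
  proof (intro conjI notI; elim exE conjE)
    fix i j k assume "i < j" "j < k" "k < length e" "e!j < e!k" "e!k < e!i"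
    then show False using avoid[of i j k] by simp
  next
    fix i j k assume "i < j" "j < k" "k < length e" "e!i > e!j" "e!j > e!k"
    then show False using avoid[of i j k] by simp
  qed
next
  assume "\<not> contains_201 e \<and> \<not> contains_210 e"
  then show "avoids_201_210 e"
    unfolding avoids_201_210_def contains_201_def contains_210_def
    by (meson linorder_neqE_nat)
qed

definition appendable :: "nat list \<Rightarrow> nat \<Rightarrow> bool" where
  "appendable e x \<longleftrightarrow> (\<forall>i j. i < j \<longrightarrow> j < length e \<longrightarrow> e!j < e!i \<longrightarrow> x < e!i \<longrightarrow> e!j = x)"

lemma avoids_201_210_snoc:
  "avoids_201_210 (e @ [x]) \<longleftrightarrow> avoids_201_210 e \<and> appendable e x"
proof
  assume ex: "avoids_201_210 (e @ [x])"
  note avoid = ex[unfolded avoids_201_210_def, rule_format]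
  show "avoids_201_210 e \<and> appendable e x"
    unfolding avoids_201_210_def appendable_def
  proof (intro conjI allI impI)
    fix i j k assume "i < j" "j < k" "k < length e" "e!j < e!i" "e!k < e!i"
    then show "e!j = e!k" using avoid[of i j k] by (simp add: nth_append)
  next
    fix i j assume "i < j" "j < length e" "e!j < e!i" "x < e!i"
    then show "e!j = x" using avoid[of i j "length e"] by (simp add: nth_append)
  qed
next
  assume "avoids_201_210 e \<and> appendable e x"
  then have avoid: "avoids_201_210 e" and app: "appendable e x" by simp_all
  show "avoids_201_210 (e @ [x])"
    unfolding avoids_201_210_def
  proof (intro allI impI)
    fix i j k
    assume ijk: "i < j" "j < k" "k < length (e @ [x])"
      and less: "(e @ [x])!j < (e @ [x])!i" "(e @ [x])!k < (e @ [x])!i"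
    have "j < length e" using ijk by simp
    with ijk less show "(e @ [x])!j = (e @ [x])!k"
      using avoid[unfolded avoids_201_210_def, rule_format, of i j k]
        app[unfolded appendable_def, rule_format, of i j]
      by (cases "k < length e") (simp_all add: nth_append)
  qed
qed

definition inv_seq_avoiding :: "nat list \<Rightarrow> bool" where
  "inv_seq_avoiding e \<longleftrightarrow> (\<forall>i<length e. e!i \<le> i) \<and> avoids_201_210 e"

lemma I_201_210_eq: "I_201_210 n = {e. length e = n \<and> inv_seq_avoiding e}"
  unfolding I_201_210_def inv_seqs_def inv_seq_avoiding_def avoids_201_210_iff
  by (auto simp: less_Suc_eq_le)

lemma inv_seq_avoiding_snoc:
  "inv_seq_avoiding (e @ [x]) \<longleftrightarrow> inv_seq_avoiding e \<and> x \<le> length e \<and> appendable e x"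
  unfolding inv_seq_avoiding_def avoids_201_210_snoc
  by (auto simp: nth_append less_Suc_eq)

lemma inv_seq_avoiding_appendD: "inv_seq_avoiding (e @ f) \<Longrightarrow> inv_seq_avoiding e"
  by (induction f rule: rev_induct) (simp_all add: inv_seq_avoiding_snoc flip: append_assoc)

(* A state (ph, M, H, v): M is the running maximum; ph records whether some entry has been
   smaller than the running maximum, and if so, v is the last such entry and H the maximum
   at that moment. *)
type_synonym scan_state = "bool \<times> nat \<times> nat \<times> nat"

fun scan_step :: "scan_state \<Rightarrow> nat \<Rightarrow> scan_state" where
  "scan_step (ph, M, H, v) x = (if M \<le> x then (ph, x, H, v) else (True, M, M, x))"

definition scan :: "nat list \<Rightarrow> scan_state" where
  "scan e = foldl scan_step (False, 0, 0, 0) e"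

lemma scan_Nil [simp]: "scan [] = (False, 0, 0, 0)"
  by (simp add: scan_def)

lemma scan_snoc [simp]: "scan (e @ [x]) = scan_step (scan e) x"
  by (simp add: scan_def)

definition scan_inv :: "nat list \<Rightarrow> scan_state \<Rightarrow> bool" where
  "scan_inv e s \<longleftrightarrow> (case s of (ph, M, H, v) \<Rightarrow>
     (\<forall>y\<in>set e. y \<le> M) \<and> M \<in> insert 0 (set e) \<and> H \<le> M \<and>
     (if ph then v < H \<and> (\<exists>i j. i < j \<and> j < length e \<and> e!i = H \<and> e!j = v) \<and>
        (\<forall>i j. i < j \<longrightarrow> j < length e \<longrightarrow> e!j < e!i \<longrightarrow> e!i \<le> H \<and> (v < e!i \<longrightarrow> e!j = v))
      else H = 0 \<and> sorted e))"

lemma appendable_iff_scan_inv: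
  assumes "scan_inv e (ph, M, H, v)"
  shows "appendable e x \<longleftrightarrow> H \<le> x \<or> ph \<and> x = v"
proof (cases ph)
  case False
  then have "H = 0" "sorted e" using assms by (simp_all add: scan_inv_def)
  then show ?thesis by (auto simp: appendable_def sorted_iff_nth_mono_less not_less[symmetric])
next
  case True
  then have "v < H" and witness: "\<exists>i j. i < j \<and> j < length e \<and> e!i = H \<and> e!j = v"
    and descents: "\<And>i j. i < j \<Longrightarrow> j < length e \<Longrightarrow> e!j < e!i \<Longrightarrow> e!i \<le> H \<and> (v < e!i \<longrightarrow> e!j = v)"
    using assms by (simp_all add: scan_inv_def)
  show ?thesis
  proof
    assume app: "appendable e x"
    obtain i j where "i < j" "j < length e" "e!i = H" "e!j = v" using witness by blast
    then show "H \<le> x \<or> ph \<and> x = v"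
      using app[unfolded appendable_def, rule_format, of i j] \<open>v < H\<close> True by force
  next
    assume "H \<le> x \<or> ph \<and> x = v"
    then show "appendable e x"
      unfolding appendable_def using descents by fastforce
  qed
qed

lemma scan_inv_snoc_ge:
  assumes inv: "scan_inv e (ph, M, H, v)" and "M \<le> x"
  shows "scan_inv (e @ [x]) (ph, x, H, v)"
proof -
  have le_x: "\<forall>y\<in>set e. y \<le> x" "H \<le> x"
    using inv \<open>M \<le> x\<close> by (auto simp: scan_inv_def)
  have old_descents: "i < j \<Longrightarrow> j < length (e @ [x]) \<Longrightarrow> (e @ [x])!j < (e @ [x])!i \<Longrightarrow>
      j < length e \<and> (e @ [x])!i = e!i \<and> (e @ [x])!j = e!j" for i j
    using le_x(1) by (auto simp: nth_append less_Suc_eq) (meson leD nth_mem)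
  show ?thesis
  proof (cases ph)
    case True
    with inv have "v < H" and witness: "\<exists>i j. i < j \<and> j < length e \<and> e!i = H \<and> e!j = v"
      and descents: "\<forall>i j. i < j \<longrightarrow> j < length e \<longrightarrow> e!j < e!i \<longrightarrow> e!i \<le> H \<and> (v < e!i \<longrightarrow> e!j = v)"
      by (simp_all add: scan_inv_def)
    from witness obtain i j where "i < j" "j < length e" "e!i = H" "e!j = v" by blast
    then have "\<exists>i j. i < j \<and> j < length (e @ [x]) \<and> (e @ [x])!i = H \<and> (e @ [x])!j = v"
      by (intro exI[of _ i] exI[of _ j]) (simp add: nth_append)
    moreover have "\<forall>i j. i < j \<longrightarrow> j < length (e @ [x]) \<longrightarrow> (e @ [x])!j < (e @ [x])!i \<longrightarrow>
        (e @ [x])!i \<le> H \<and> (v < (e @ [x])!i \<longrightarrow> (e @ [x])!j = v)"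
    proof (intro allI impI)
      fix i j assume "i < j" "j < length (e @ [x])" "(e @ [x])!j < (e @ [x])!i"
      with old_descents descents
      show "(e @ [x])!i \<le> H \<and> (v < (e @ [x])!i \<longrightarrow> (e @ [x])!j = v)" by metis
    qed
    ultimately show ?thesis
      using True le_x \<open>v < H\<close> by (simp add: scan_inv_def)
  next
    case False
    with inv le_x show ?thesis by (simp add: scan_inv_def sorted_append)
  qed
qed

lemma scan_inv_snoc_less:
  assumes inv: "scan_inv e (ph, M, H, v)" and "x < M" and app: "appendable e x"
  shows "scan_inv (e @ [x]) (True, M, M, x)"
proof -
  have le_M: "\<forall>y\<in>set (e @ [x]). y \<le> M" and "M \<in> set e"
    using inv \<open>x < M\<close> by (auto simp: scan_inv_def)
  then obtain i where "i < length e" "e!i = M" by (auto simp: in_set_conv_nth)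
  then have "\<exists>i j. i < j \<and> j < length (e @ [x]) \<and> (e @ [x])!i = M \<and> (e @ [x])!j = x"
    by (intro exI[of _ i] exI[of _ "length e"]) (simp add: nth_append)
  moreover have "\<forall>i j. i < j \<longrightarrow> j < length (e @ [x]) \<longrightarrow> (e @ [x])!j < (e @ [x])!i \<longrightarrow>
      (e @ [x])!i \<le> M \<and> (x < (e @ [x])!i \<longrightarrow> (e @ [x])!j = x)"
  proof (intro allI impI conjI)
    fix i j assume ij: "i < j" "j < length (e @ [x])" "(e @ [x])!j < (e @ [x])!i"
    then show "(e @ [x])!i \<le> M" using le_M nth_mem[of i "e @ [x]"] by auto
    assume "x < (e @ [x])!i"
    with ij app show "(e @ [x])!j = x"
      unfolding appendable_def by (cases "j < length e") (simp_all add: nth_append)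
  qed
  ultimately show ?thesis
    using le_M inv \<open>x < M\<close> by (simp add: scan_inv_def)
qed

lemma scan_inv_scan: "avoids_201_210 e \<Longrightarrow> scan_inv e (scan e)"
proof (induction e rule: rev_induct)
  case Nil
  show ?case by (simp add: scan_inv_def)
next
  case (snoc x e)
  then have "scan_inv e (scan e)" "appendable e x" by (simp_all add: avoids_201_210_snoc)
  then show ?case
    using scan_inv_snoc_ge scan_inv_snoc_less by (cases "scan e") auto
qed

lemma scan_inv_bounds:
  assumes "scan_inv e (ph, M, H, v)"
  shows "H \<le> M" and "ph \<Longrightarrow> v < H"
  using assms by (auto simp: scan_inv_def split: if_splits)

lemma scan_max_less_length:
  assumes "inv_seq_avoiding e" "e \<noteq> []" "scan_inv e (ph, M, H, v)"
  shows "M < length e"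
proof -
  have "M \<in> insert 0 (set e)" using assms(3) by (simp add: scan_inv_def)
  then show ?thesis
    using assms(1,2) by (auto simp: in_set_conv_nth inv_seq_avoiding_def dest: le_less_trans)
qed

section \<open>Counting extensions\<close>

definition extensions :: "nat \<Rightarrow> nat list \<Rightarrow> nat list set" where
  "extensions m e = {f. length f = m \<and> inv_seq_avoiding (e @ f)}"

lemma finite_extensions: "finite (extensions m e)"
proof (rule finite_subset)
  show "extensions m e \<subseteq> {f. set f \<subseteq> {0..length e + m} \<and> length f = m}"
  proof (safe)
    fix f y assume "f \<in> extensions m e" "y \<in> set f"
    then obtain i where "i < m" "f!i = y" "inv_seq_avoiding (e @ f)" "length f = m"
      by (auto simp: extensions_def in_set_conv_nth)
    then show "y \<in> {0..length e + m}"
      unfolding inv_seq_avoiding_def by (force simp: nth_append dest: spec[of _ "length e + i"])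
  qed (simp add: extensions_def)
qed (rule finite_lists_length_eq, simp)

lemma extensions_0: "inv_seq_avoiding e \<Longrightarrow> extensions 0 e = {[]}"
  by (auto simp: extensions_def)

lemma extensions_Suc:
  "extensions (Suc m) e = (\<Union>x\<in>{x. x \<le> length e \<and> appendable e x}. Cons x ` extensions m (e @ [x]))"
proof
  show "extensions (Suc m) e \<subseteq> (\<Union>x\<in>{x. x \<le> length e \<and> appendable e x}. Cons x ` extensions m (e @ [x]))"
  proof
    fix f assume "f \<in> extensions (Suc m) e"
    then obtain x f' where f: "f = x # f'" "length f' = m" "inv_seq_avoiding ((e @ [x]) @ f')"
      by (cases f) (auto simp: extensions_def)
    then have "inv_seq_avoiding (e @ [x])" using inv_seq_avoiding_appendD by blast
    with f show "f \<in> (\<Union>x\<in>{x. x \<le> length e \<and> appendable e x}. Cons x ` extensions m (e @ [x]))"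
      by (auto simp: inv_seq_avoiding_snoc extensions_def)
  qed
qed (auto simp: extensions_def)

lemma card_extensions_Suc:
  "card (extensions (Suc m) e) = (\<Sum>x | x \<le> length e \<and> appendable e x. card (extensions m (e @ [x])))"
proof -
  have "card (extensions (Suc m) e) =
      (\<Sum>x | x \<le> length e \<and> appendable e x. card (Cons x ` extensions m (e @ [x])))"
    unfolding extensions_Suc by (rule card_UN_disjoint) (auto simp: finite_extensions)
  then show ?thesis by (simp add: card_image)
qed

lemma scan_inv_of_inv_seq_avoiding: "inv_seq_avoiding e \<Longrightarrow> scan_inv e (scan e)"
  by (simp add: inv_seq_avoiding_def scan_inv_scan)

lemma card_lower_children:
  assumes "H \<le> M" "ph \<Longrightarrow> v < H"
  shows "card {x. x < M \<and> (H \<le> x \<or> ph \<and> x = v)} = M - H + of_bool ph"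
proof -
  have "{x. x < M \<and> (H \<le> x \<or> ph \<and> x = v)} = {H..<M} \<union> {x. ph \<and> x = v}"
    using assms by auto
  then show ?thesis using assms by (cases ph) auto
qed

lemma card_extensions_Suc_scan:
  assumes "inv_seq_avoiding e" "e \<noteq> []" "scan e = (ph, M, H, v)"
  shows "card (extensions (Suc m) e) =
    (\<Sum>j=0..length e - M. card (extensions m (e @ [j + M]))) +
    (\<Sum>x | x < M \<and> (H \<le> x \<or> ph \<and> x = v). card (extensions m (e @ [x])))"
proof -
  have inv: "scan_inv e (ph, M, H, v)"
    using scan_inv_of_inv_seq_avoiding assms by metis
  note bounds = scan_inv_bounds[OF inv] scan_max_less_length[OF assms(1,2) inv]
  have split: "{x. x \<le> length e \<and> appendable e x} =
      {M..length e} \<union> {x. x < M \<and> (H \<le> x \<or> ph \<and> x = v)}"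
    using bounds by (auto simp: appendable_iff_scan_inv[OF inv])
  have "(\<Sum>x=M..length e. card (extensions m (e @ [x]))) =
      (\<Sum>j=0..length e - M. card (extensions m (e @ [j + M])))"
    using sum.shift_bounds_cl_nat_ivl[of "\<lambda>x. card (extensions m (e @ [x]))" 0 M "length e - M"] bounds
    by simp
  then show ?thesis
    unfolding card_extensions_Suc split by (subst sum.union_disjoint) auto
qed

lemma inv_seq_avoiding_snoc_scan:
  assumes "inv_seq_avoiding e" "e \<noteq> []" "scan e = (ph, M, H, v)"
  shows "M \<le> x \<Longrightarrow> x \<le> length e \<Longrightarrow> inv_seq_avoiding (e @ [x]) \<and> scan (e @ [x]) = (ph, x, H, v)"
    and "x < M \<Longrightarrow> H \<le> x \<or> ph \<and> x = v \<Longrightarrow> inv_seq_avoiding (e @ [x]) \<and> scan (e @ [x]) = (True, M, M, x)"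
proof -
  have inv: "scan_inv e (ph, M, H, v)"
    using scan_inv_of_inv_seq_avoiding assms by metis
  note bounds = scan_inv_bounds[OF inv] scan_max_less_length[OF assms(1,2) inv]
  show "M \<le> x \<Longrightarrow> x \<le> length e \<Longrightarrow> inv_seq_avoiding (e @ [x]) \<and> scan (e @ [x]) = (ph, x, H, v)"
    using assms bounds by (simp add: inv_seq_avoiding_snoc appendable_iff_scan_inv[OF inv])
  show "x < M \<Longrightarrow> H \<le> x \<or> ph \<and> x = v \<Longrightarrow> inv_seq_avoiding (e @ [x]) \<and> scan (e @ [x]) = (True, M, M, x)"
    using assms bounds by (simp add: inv_seq_avoiding_snoc appendable_iff_scan_inv[OF inv])
qed

lemma card_extensions_eq_coeff:
  fixes G :: "bool \<Rightarrow> nat \<Rightarrow> nat \<Rightarrow> real fps"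
  assumes rec: "\<And>ph a b. 1 \<le> a \<Longrightarrow> G ph a b =
    1 + fps_X * ((\<Sum>j=0..a. G ph (a + 1 - j) (b + j)) + of_nat (b + of_bool ph) * G True (a + 1) 0)"
  shows "inv_seq_avoiding e \<Longrightarrow> e \<noteq> [] \<Longrightarrow> scan e = (ph, M, H, v) \<Longrightarrow>
    real (card (extensions m e)) = G ph (length e - M) (M - H) $ m"
proof (induction m arbitrary: e ph M H v)
  case 0
  have "1 \<le> length e - M"
    using scan_max_less_length scan_inv_of_inv_seq_avoiding "0.prems" by fastforce
  then have "G ph (length e - M) (M - H) $ 0 = 1"
    by (subst rec) simp_all
  then show ?case
    using extensions_0 "0.prems"(1) by simp
next
  case (Suc m)
  have inv: "scan_inv e (ph, M, H, v)"
    using scan_inv_of_inv_seq_avoiding Suc.prems by metis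
  note bounds = scan_inv_bounds[OF inv] scan_max_less_length[OF Suc.prems(1,2) inv]
  define a b where "a = length e - M" and "b = M - H"
  have "real (card (extensions m (e @ [j + M]))) = G ph (a + 1 - j) (b + j) $ m" if "j \<le> a" for j
  proof -
    have "length (e @ [j + M]) - (j + M) = a + 1 - j" "j + M - H = b + j"
      using that bounds by (simp_all add: a_def b_def)
    with that show ?thesis
      using Suc.IH inv_seq_avoiding_snoc_scan(1)[OF Suc.prems, of "j + M"] by (simp add: a_def)
  qed
  moreover have "real (card (extensions m (e @ [x]))) = G True (a + 1) 0 $ m"
    if "x < M" "H \<le> x \<or> ph \<and> x = v" for x
  proof -
    have "length (e @ [x]) - M = a + 1"
      using bounds by (simp add: a_def)
    with that show ?thesis
      using Suc.IH inv_seq_avoiding_snoc_scan(2)[OF Suc.prems, of x] by simp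
  qed
  ultimately have "real (card (extensions (Suc m) e)) =
      (\<Sum>j=0..a. G ph (a + 1 - j) (b + j) $ m) + real (b + of_bool ph) * G True (a + 1) 0 $ m"
    using card_extensions_Suc_scan[OF Suc.prems, of m] card_lower_children[OF bounds(1,2)]
    by (simp add: a_def b_def)
  also have "\<dots> = G ph a b $ Suc m"
  proof -
    have "1 \<le> a" using bounds by (simp add: a_def)
    from rec[OF this, of ph b] show ?thesis by (simp add: fps_sum_nth flip: fps_of_nat)
  qed
  finally show ?case by (simp add: a_def b_def)
qed

section \<open>Solving the recursion\<close>

definition sqrt_1_minus_8X :: "real fps" where
  "sqrt_1_minus_8X = Abs_fps (\<lambda>n. ((1/2) gchoose n) * (-8) ^ n)"

lemma sqrt_1_minus_8X_squared: "sqrt_1_minus_8X ^ 2 = 1 - 8 * fps_X"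
proof (rule fps_ext)
  fix n
  let ?B = "fps_binomial (1/2 :: real)"
  have "?B * ?B = 1 + fps_X"
    using fps_binomial_add_mult[of "1/2 :: real" "1/2"] by (simp add: fps_binomial_1)
  have "(sqrt_1_minus_8X ^ 2) $ n = (\<Sum>i=0..n. (-8) ^ n * (?B $ i * ?B $ (n - i)))"
    by (auto simp: power2_eq_square fps_mult_nth sqrt_1_minus_8X_def mult_ac
        simp flip: power_add intro!: sum.cong)
  also have "\<dots> = (-8) ^ n * (?B * ?B) $ n"
    by (simp add: fps_mult_nth sum_distrib_left)
  also have "\<dots> = (1 - 8 * fps_X :: real fps) $ n"
    unfolding \<open>?B * ?B = 1 + fps_X\<close> by (cases n; cases "n - 1") (auto simp: fps_numeral_nth)
  finally show "(sqrt_1_minus_8X ^ 2) $ n = (1 - 8 * fps_X :: real fps) $ n" .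
qed

(* C(t) = c(2t) for the Catalan series c, i.e. (1 - sqrt(1 - 8t)) / (4t). *)
definition catalan2 :: "real fps" where
  "catalan2 = Abs_fps (\<lambda>n. - sqrt_1_minus_8X $ Suc n / 4)"

lemma sqrt_1_minus_8X_eq: "sqrt_1_minus_8X = 1 - 4 * fps_X * catalan2"
proof (rule fps_ext)
  fix n show "sqrt_1_minus_8X $ n = (1 - 4 * fps_X * catalan2) $ n"
    by (cases n) (simp_all add: sqrt_1_minus_8X_def catalan2_def mult.assoc fps_numeral_nth)
qed

lemma catalan2_equation: "2 * fps_X * catalan2 ^ 2 = catalan2 - 1"
proof -
  define E where "E = 2 * fps_X * catalan2 ^ 2 - catalan2 + 1"
  have "fps_X * (8 * E) = 0"
    using sqrt_1_minus_8X_squared unfolding sqrt_1_minus_8X_eq E_def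
    by (simp add: algebra_simps power2_eq_square)
  moreover have "(8 :: real fps) \<noteq> 0"
    by (metis zero_neq_numeral)
  ultimately have "E = 0"
    by (simp only: mult_eq_0_iff fps_X_neq_zero) simp
  then show ?thesis by (simp add: E_def algebra_simps)
qed

lemma catalan2_nth_0: "catalan2 $ 0 = 1"
  and catalan2_nth_1: "catalan2 $ 1 = 2"
  by (simp_all add: catalan2_def sqrt_1_minus_8X_def gbinomial_Suc)

lemma mult_inverse_1_plus_catalan2_sq: "(1 + catalan2 ^ 2) * inverse (1 + catalan2 ^ 2) = 1"
  by (rule inverse_mult_eq_1') (simp add: catalan2_nth_0 power2_eq_square)

lemma weighted_geometric_sum:
  fixes x :: "'a :: comm_ring_1"
  shows "(x - 1) ^ 2 * (\<Sum>k\<le>a. of_nat (a - k) * x ^ (k + 1)) = x ^ (a + 2) - x - of_nat (a + 1) * (x - 1) * x"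
proof (induction a)
  case 0
  show ?case by (simp add: algebra_simps power2_eq_square)
next
  case (Suc a)
  have "(\<Sum>k\<le>Suc a. of_nat (Suc a - k) * x ^ (k + 1)) = (\<Sum>k\<le>a. of_nat (Suc a - k) * x ^ (k + 1))"
    by simp
  also have "\<dots> = (\<Sum>k\<le>a. of_nat (a - k) * x ^ (k + 1) + x * x ^ k)"
    by (intro sum.cong) (auto simp: Suc_diff_le algebra_simps)
  also have "\<dots> = (\<Sum>k\<le>a. of_nat (a - k) * x ^ (k + 1)) + x * (\<Sum>k\<le>a. x ^ k)"
    by (simp add: sum.distrib sum_distrib_left)
  finally have "(x - 1) ^ 2 * (\<Sum>k\<le>Suc a. of_nat (Suc a - k) * x ^ (k + 1)) =
      (x - 1) ^ 2 * (\<Sum>k\<le>a. of_nat (a - k) * x ^ (k + 1)) + x * (x - 1) * ((x - 1) * (\<Sum>k\<le>a. x ^ k))"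
    by (simp add: algebra_simps power2_eq_square)
  also have "(x - 1) * (\<Sum>k\<le>a. x ^ k) = x ^ (a + 1) - 1"
    using power_diff_1_eq[of x "Suc a"] by (simp add: lessThan_Suc_atMost)
  finally show ?case
    unfolding Suc.IH by (simp add: algebra_simps)
qed

(* Generating function of the number of extensions from a state with a = length - M and
   b = M - H; see ext_gf_rec and card_extensions_eq_coeff. *)
definition ext_gf :: "bool \<Rightarrow> nat \<Rightarrow> nat \<Rightarrow> real fps" where
  "ext_gf ph a b = inverse (1 + catalan2 ^ 2) *
     (catalan2 ^ 2 * (1 + catalan2 ^ (a + of_bool ph - 1)) + of_nat b * catalan2 * (catalan2 - 1) * catalan2 ^ a)"

lemma ext_gf_sum:
  defines "C \<equiv> catalan2" and "Iv \<equiv> inverse (1 + catalan2 ^ 2)"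
  shows "(\<Sum>j=0..a. ext_gf ph (a + 1 - j) (b + j)) = Iv *
     (of_nat (a + 1) * C ^ 2 + C ^ 2 * C ^ of_bool ph * (\<Sum>k\<le>a. C ^ k)
      + C * (C - 1) * (of_nat b * C * (\<Sum>k\<le>a. C ^ k) + (\<Sum>k\<le>a. of_nat (a - k) * C ^ (k + 1))))"
proof -
  have "(\<Sum>j=0..a. ext_gf ph (a + 1 - j) (b + j)) = (\<Sum>k=0..a. ext_gf ph (a + 1 - (a + 0 - k)) (b + (a + 0 - k)))"
    by (rule sum.atLeastAtMost_rev)
  also have "\<dots> = (\<Sum>k\<le>a. Iv * (C ^ 2 + C ^ 2 * C ^ of_bool ph * C ^ k
      + C * (C - 1) * (of_nat b * C * C ^ k + of_nat (a - k) * C ^ (k + 1))))"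
    by (intro sum.cong) (auto simp: ext_gf_def C_def Iv_def algebra_simps power_add)
  also have "\<dots> = Iv * (of_nat (a + 1) * C ^ 2 + C ^ 2 * C ^ of_bool ph * (\<Sum>k\<le>a. C ^ k)
      + C * (C - 1) * (of_nat b * C * (\<Sum>k\<le>a. C ^ k) + (\<Sum>k\<le>a. of_nat (a - k) * C ^ (k + 1))))"
    by (simp only: sum.distrib sum_distrib_left[symmetric] sum_constant card_atMost)
       (simp add: mult_ac)
  finally show ?thesis .
qed

lemma catalan2_neq_1: "catalan2 \<noteq> 1"
proof
  assume "catalan2 = 1"
  then have "catalan2 $ 1 = 0" by simp
  then show False using catalan2_nth_1 by simp
qed

lemma ext_gf_rec:
  assumes "1 \<le> a"
  shows "ext_gf ph a b = 1 + fps_X * ((\<Sum>j=0..a. ext_gf ph (a + 1 - j) (b + j))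
    + of_nat (b + of_bool ph) * ext_gf True (a + 1) 0)"
proof -
  define C Iv P T where "C = catalan2" and "Iv = inverse (1 + catalan2 ^ 2)"
    and "P = (\<Sum>k\<le>a. C ^ k)" and "T = (\<Sum>k\<le>a. of_nat (a - k) * C ^ (k + 1))"
  obtain a' where a: "a = Suc a'" using assms by (cases a) auto
  define u d where "u = C ^ a'" and "d = C ^ of_bool ph"
  have lhs: "ext_gf ph a b = Iv * (C ^ 2 * (1 + u * d) + of_nat b * C * (C - 1) * (C * u))"
    by (cases ph) (simp_all add: ext_gf_def C_def Iv_def u_def d_def a)
  have top: "ext_gf True (a + 1) 0 = Iv * (C ^ 2 * (1 + C ^ 2 * u))"
    by (simp add: ext_gf_def C_def Iv_def u_def a power2_eq_square)
  have "(1 + C ^ 2) * Iv = 1"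
    unfolding C_def Iv_def by (rule mult_inverse_1_plus_catalan2_sq)
  moreover have "2 * fps_X * C ^ 2 = C - 1"
    by (simp add: C_def catalan2_equation)
  moreover have "(C - 1) * P = C ^ 2 * u - 1"
    using power_diff_1_eq[of C "Suc a", symmetric]
    by (simp add: P_def u_def lessThan_Suc_atMost a power2_eq_square mult.assoc)
  moreover have "(C - 1) ^ 2 * T = C ^ 3 * u - C - of_nat (a + 1) * (C - 1) * C"
    using weighted_geometric_sum[of C a] by (simp add: T_def u_def a power_add numeral_3_eq_3)
  \<comment> \<open>Since d is affine in of_bool ph, one ideal-membership check covers both phases.\<close>
  moreover have "d = 1 + of_bool ph * (C - 1)"
    by (cases ph) (simp_all add: d_def)
  ultimately have "(C - 1) ^ 2 * (Iv * (C ^ 2 * (1 + u * d) + of_nat b * C * (C - 1) * (C * u))) =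
    (C - 1) ^ 2 * (1 + fps_X * (Iv * (of_nat (a + 1) * C ^ 2 + C ^ 2 * d * P + C * (C - 1) * (of_nat b * C * P + T))
       + (of_nat b + of_bool ph) * (Iv * (C ^ 2 * (1 + C ^ 2 * u)))))"
    by algebra
  moreover have "(C - 1) ^ 2 \<noteq> 0"
    using catalan2_neq_1 by (simp add: C_def)
  ultimately show ?thesis
    unfolding lhs top ext_gf_sum by (simp add: C_def Iv_def P_def T_def d_def mult.assoc)
qed

lemma I_201_210_eq_Cons_extensions:
  assumes "1 \<le> n"
  shows "I_201_210 n = Cons 0 ` extensions (n - 1) [0]"
proof
  show "I_201_210 n \<subseteq> Cons 0 ` extensions (n - 1) [0]"
  proof
    fix e assume "e \<in> I_201_210 n"
    then have e: "length e = n" "inv_seq_avoiding e" by (simp_all add: I_201_210_eq)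
    with assms obtain y f where "e = y # f" by (cases e) auto
    moreover have "e ! 0 \<le> 0" using e assms unfolding inv_seq_avoiding_def by force
    ultimately show "e \<in> Cons 0 ` extensions (n - 1) [0]"
      using e by (auto simp: extensions_def)
  qed
qed (use assms in \<open>auto simp: extensions_def I_201_210_eq\<close>)

lemma coeffA_Suc: "coeffA (Suc m) = ext_gf False 1 0 $ m"
proof -
  have "inv_seq_avoiding [0]" by (simp add: inv_seq_avoiding_def avoids_201_210_def)
  moreover have "scan [0] = (False, 0, 0, 0)" by (simp add: scan_def)
  ultimately have "real (card (extensions m [0])) = ext_gf False 1 0 $ m"
    using card_extensions_eq_coeff[OF ext_gf_rec] by fastforce
  moreover have "card (I_201_210 (Suc m)) = card (extensions m [0])"
    using I_201_210_eq_Cons_extensions[of "Suc m"] by (simp add: card_image)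
  ultimately show ?thesis by (simp add: coeffA_def)
qed

lemma fpsA_eq: "fpsA = (catalan2 - 1) * inverse (1 + catalan2 ^ 2)"
proof -
  have "fpsA = fps_X * ext_gf False 1 0"
  proof (rule fps_ext)
    fix n show "fpsA $ n = (fps_X * ext_gf False 1 0) $ n"
      by (cases n) (simp_all add: fpsA_def coeffA_Suc coeffA_def[of 0])
  qed
  also have "\<dots> = 2 * fps_X * catalan2 ^ 2 * inverse (1 + catalan2 ^ 2)"
    by (simp add: ext_gf_def algebra_simps)
  finally show ?thesis by (simp add: catalan2_equation)
qed

lemma fpsA_quadratic:
  "(2 * fps_X ^ 2 - 2 * fps_X + 1) * fpsA ^ 2 + (4 * fps_X ^ 2 - 3 * fps_X) * fpsA + 2 * fps_X ^ 2 = 0"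
proof -
  from catalan2_equation mult_inverse_1_plus_catalan2_sq show ?thesis
    unfolding fpsA_eq by algebra
qed

lemma fpsA_linear:
  "(2 - 4 * fps_X + 4 * fps_X ^ 2) * fpsA = 3 * fps_X - 4 * fps_X ^ 2 - fps_X * sqrt_1_minus_8X"
proof -
  from catalan2_equation mult_inverse_1_plus_catalan2_sq show ?thesis
    unfolding fpsA_eq sqrt_1_minus_8X_eq by algebra
qed

section \<open>Convergence\<close>

lemma abs_gbinomial_half_le_1: "\<bar>(1/2 :: real) gchoose k\<bar> \<le> 1"
proof -
  have "\<bar>\<Prod>i=0..<k. (1/2 :: real) - of_nat i\<bar> \<le> (\<Prod>i=0..<k. of_nat (Suc i))"
    unfolding abs_prod by (rule prod_mono) auto
  moreover have "(\<Prod>i=0..<k. of_nat (Suc i) :: real) > 0"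
    by (rule prod_pos) simp
  ultimately show ?thesis
    by (simp add: gbinomial_prod_rev fact_prod_Suc divide_le_eq_1)
qed

lemma abs_sqrt_1_minus_8X_nth_le: "\<bar>sqrt_1_minus_8X $ n\<bar> \<le> 8 ^ n"
  using mult_right_mono[OF abs_gbinomial_half_le_1[of n], of "8 ^ n"]
  by (simp add: sqrt_1_minus_8X_def abs_mult power_abs)

lemma fps_conv_radius_ge_of_nth_bound:
  fixes f :: "real fps"
  assumes "\<And>n. \<bar>f $ n\<bar> \<le> c ^ n" and "c > 0"
  shows "ereal (1 / c) \<le> fps_conv_radius f"
  unfolding fps_conv_radius_def
proof (rule conv_radius_geI_ex')
  fix r :: real assume "0 < r" "ereal r < ereal (1 / c)"
  then have "c * r < 1" using \<open>c > 0\<close> by (simp add: field_simps)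
  show "summable (\<lambda>n. f $ n * of_real r ^ n)"
  proof (rule summable_comparison_test')
    show "summable (\<lambda>n. (c * r) ^ n)"
      using \<open>c * r < 1\<close> \<open>0 < r\<close> \<open>c > 0\<close> by (intro summable_geometric) simp
    show "norm (f $ n * of_real r ^ n) \<le> (c * r) ^ n" for n
      using mult_right_mono[OF assms(1)[of n], of "r ^ n"] \<open>0 < r\<close>
      by (simp add: abs_mult power_abs power_mult_distrib)
  qed
qed

lemma nth_bound_of_mult_quadratic:
  fixes F R :: "real fps"
  assumes eq: "(2 - 4 * fps_X + 4 * fps_X ^ 2) * F = R" and R: "\<And>n. \<bar>R $ n\<bar> \<le> 8 ^ n"
  shows "\<bar>F $ n\<bar> \<le> 8 ^ n"
proof (induction n rule: less_induct)
  case (less n)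
  have "2 * F $ n = R $ n + (if n = 0 then 0 else 4 * F $ (n - 1)) - (if n \<le> 1 then 0 else 4 * F $ (n - 2))"
  proof -
    have "(2 - 4 * fps_X + 4 * fps_X ^ 2) * F = 2 * F - 4 * (fps_X * F) + 4 * (fps_X * (fps_X * F))"
      by (simp add: algebra_simps power2_eq_square)
    from arg_cong[where f = "\<lambda>G. G $ n", OF eq[unfolded this]] show ?thesis
      by (auto simp: fps_numeral_nth numeral_2_eq_2)
  qed
  moreover have "(if n = 0 then 0 else 4 * \<bar>F $ (n - 1)\<bar>) \<le> 8 ^ n / 2"
    and "(if n \<le> 1 then 0 else 4 * \<bar>F $ (n - 2)\<bar>) \<le> 8 ^ n / 16"
    using less[of "n - 1"] less[of "n - 2"]
    by (auto simp: power_diff) 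
  ultimately show ?case
    using R[of n] by (auto split: if_splits)
qed

lemma eval_fps_sqrt_1_minus_8X:
  assumes "\<bar>t\<bar> < 1/8"
  shows "eval_fps sqrt_1_minus_8X t = sqrt (1 - 8 * t)"
proof -
  have "(\<lambda>n. ((1/2) gchoose n) * (-8 * t) ^ n) sums sqrt (1 + -8 * t)"
    using assms by (intro sqrt_series) simp
  moreover have "((1/2) gchoose n) * (-8 * t) ^ n = sqrt_1_minus_8X $ n * t ^ n" for n
    by (simp add: sqrt_1_minus_8X_def flip: power_mult_distrib)
  ultimately show ?thesis
    by (simp add: eval_fps_def sums_iff)
qed

lemma fpsA_conv_radius: "ereal (1/8) \<le> fps_conv_radius fpsA"
proof -
  have "\<bar>(3 * fps_X - 4 * fps_X ^ 2 - fps_X * sqrt_1_minus_8X) $ n\<bar> \<le> 8 ^ n" for n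
    using abs_sqrt_1_minus_8X_nth_le[of "n - 1"]
    by (cases n) (auto simp: fps_numeral_nth power2_eq_square)
  then have "\<bar>fpsA $ n\<bar> \<le> 8 ^ n" for n
    by (rule nth_bound_of_mult_quadratic[OF fpsA_linear])
  then show ?thesis by (rule fps_conv_radius_ge_of_nth_bound) simp
qed

lemma eval_fpsA:
  assumes t: "\<bar>t\<bar> < 1/8"
  shows "eval_fps fpsA t = (3 * t - 4 * t ^ 2 - t * sqrt (1 - 8 * t)) / (4 * t ^ 2 - 4 * t + 2)"
proof -
  have t8: "ereal (norm t) < ereal (1/8)" using t by simp
  have "ereal (1/8) \<le> fps_conv_radius sqrt_1_minus_8X"
    by (rule fps_conv_radius_ge_of_nth_bound[OF abs_sqrt_1_minus_8X_nth_le]) simp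
  then have radius: "ereal (norm t) < fps_conv_radius fpsA" "ereal (norm t) < fps_conv_radius sqrt_1_minus_8X"
    using less_le_trans[OF t8] fpsA_conv_radius by blast+
  have D: "fps_of_poly [:2, -4, 4:] = (2 - 4 * fps_X + 4 * fps_X ^ 2 :: real fps)"
    and P: "fps_of_poly [:0, 3, -4:] = (3 * fps_X - 4 * fps_X ^ 2 :: real fps)"
    by (simp_all add: fps_of_poly_pCons algebra_simps power2_eq_square numeral_fps_const)
  have "fps_of_poly [:2, -4, 4:] * fpsA = fps_of_poly [:0, 3, -4:] - fps_X * sqrt_1_minus_8X"
    unfolding D P by (rule fpsA_linear)
  from arg_cong[where f = "\<lambda>F. eval_fps F t", OF this]
  have "(2 - 4 * t + 4 * t ^ 2) * eval_fps fpsA t = 3 * t - 4 * t ^ 2 - t * sqrt (1 - 8 * t)"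
    using radius fps_conv_radius_mult[of fps_X sqrt_1_minus_8X]
    by (simp add: eval_fps_mult eval_fps_diff eval_fps_sqrt_1_minus_8X[OF t] algebra_simps power2_eq_square)
  moreover have "4 * t ^ 2 - 4 * t + 2 > 0"
    using zero_le_power2[of "2 * t - 1"] by (simp add: power2_eq_square algebra_simps)
  ultimately show ?thesis by (simp add: field_simps)
qed

theorem theorem4p7:
  shows "(2 * fps_X ^ 2 - 2 * fps_X + 1) * fpsA ^ 2 + (4 * fps_X ^ 2 - 3 * fps_X) * fpsA
           + 2 * fps_X ^ 2 = (0 :: real fps) \<and>
         (\<forall>t::real. \<bar>t\<bar> < 1/8 \<longrightarrow>
           (\<lambda>n. coeffA n * t ^ n) sums
             ((3 * t - 4 * t ^ 2 - t * sqrt (1 - 8 * t)) / (4 * t ^ 2 - 4 * t + 2)))"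
proof (intro conjI allI impI)
  show "(2 * fps_X ^ 2 - 2 * fps_X + 1) * fpsA ^ 2 + (4 * fps_X ^ 2 - 3 * fps_X) * fpsA + 2 * fps_X ^ 2 = 0"
    by (rule fpsA_quadratic)
next
  fix t :: real assume t: "\<bar>t\<bar> < 1/8"
  then have "ereal (norm t) < ereal (1/8)" by simp
  then have "ereal (norm t) < fps_conv_radius fpsA"
    using fpsA_conv_radius by (rule less_le_trans)
  from sums_eval_fps[OF this] show "(\<lambda>n. coeffA n * t ^ n) sums
      ((3 * t - 4 * t ^ 2 - t * sqrt (1 - 8 * t)) / (4 * t ^ 2 - 4 * t + 2))"
    unfolding eval_fpsA[OF t] by (simp add: fpsA_def)
qed

end
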